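(* Let $\Bbbk$ be a field, $A$ a $\Bbbk$-algebra and $\Gamma$ a subalgebra of $A$, and let $\sim$ be an equivalence relation on $\mathrm{cfs}(\Gamma)$. Suppose $\Gamma$ is a Harish-Chandra block subalgebra of $A$ with respect to $\sim$. Then: (i) $\mathrm{HC}(A;\Gamma,\sim)=\bigoplus_{\mathcal{D}\in(\mathrm{cfs}(\Gamma)/{\sim})/\Delta}\mathrm{HC}(A;\Gamma,\sim;\mathcal{D})$; that is, every $V\in \mathrm{HC}(A;\Gamma,\sim)$ is the direct sum, as $A$-modules, of modules $V_{\mathcal D}\in \mathrm{HC}(A;\Gamma,\sim;\mathcal{D})$ (one for each $\Delta$-class $\mathcal D$), and there are no nonzero $A$-module maps between objects of $\mathrm{HC}(A;\Gamma,\sim;\mathcal{D})$ and $\mathrm{HC}(A;\Gamma,\sim;\mathcal{D}')$ for distinct $\Delta$-classes $\mathcal D\neq\mathcal D'$. (ii) $\mathrm{Irr}(A;\Gamma,\sim)=\bigsqcup_{\mathcal{D}\in(\mathrm{cfs}(\Gamma)/{\sim})/\nabla}\mathrm{Irr}(A;\Gamma,\sim;\mathcal{D})$.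
   Context: All algebras are associative unital $\Bbbk$-algebras. $\mathrm{cfs}(\Gamma)$ denotes the set of maximal two-sided ideals $\mathfrak m$ of $\Gamma$ with $\Gamma/\mathfrak m$ finite-dimensional. For an equivalence class $B\in\mathrm{cfs}(\Gamma)/{\sim}$ let $\mathcal W(B)=\{\mathfrak m_1\cdots\mathfrak m_k: k\ge 0,\ \mathfrak m_1,\dots,\mathfrak m_k\in B\}$ (products of ideals; the empty product is $\Gamma$). For a $\Gamma$-module $V$ the block space is $V(B)=\{v\in V:\mathfrak m v=0\text{ for some }\mathfrak m\in\mathcal W(B)\}$; the sum $\sum_B V(B)$ is always direct. $V$ is a block module if $V=\bigoplus_{B}V(B)$, and $\mathrm{Supp}(V)=\{B: V(B)\neq 0\}$. A Harish-Chandra block module is an $A$-module that is a block module as a $\Gamma$-module; $\mathrm{HC}(A;\Gamma,\sim)$ is the full subcategory of $A$-modules consisting of these. $\Gamma$ is a Harish-Chandra block subalgebra of $A$ (w.r.t. $\sim$) if the left $A$-module $A/A\mathfrak m$ is a Harish-Chandra block module for every $B$ and every $\mathfrak m\in\mathcal W(B)$. Let $\prec$ be the preorder on $\mathrm{cfs}(\Gamma)/{\sim}$ generated by the pairs $B\prec C$ whenever $C\in\mathrm{Supp}(A/A\mathfrak m)$ for some $\mathfrak m\in B$. Let $\Delta$ be the equivalence relation generated by $\prec$ and $\nabla$ the equivalence relation induced by $\prec$ ($B\,\nabla\, C$ iff $B\prec C$ and $C\prec B$). For $\mathcal D\subseteq \mathrm{cfs}(\Gamma)/{\sim}$, $\mathrm{HC}(A;\Gamma,\sim;\mathcal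 D)$ is the full subcategory of Harish-Chandra block modules $V$ with $\mathrm{Supp}(V)\subseteq\mathcal D$, and $\mathrm{Irr}(A;\Gamma,\sim;\mathcal D)$ is the set of isomorphism classes of simple objects of it; $\mathrm{Irr}(A;\Gamma,\sim)$ is the set of isomorphism classes of simple Harish-Chandra block modules. *)

theory Defs
  imports Complex_Main
begin

record ('a, 'v) amod =
  mcarrier :: "'v set"
  madd :: "'v \<Rightarrow> 'v \<Rightarrow> 'v"
  mzero :: "'v"
  mact :: "'a \<Rightarrow> 'v \<Rightarrow> 'v"

definition is_amod :: "('a::{ring,monoid_mult}, 'v) amod \<Rightarrow> bool" where
  "is_amod V \<longleftrightarrow>
     mzero V \<in> mcarrier V \<and>
     (\<forall>v\<in>mcarrier V. \<forall>w\<in>mcarrier V. madd V v w \<in> mcarrier V) \<and>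
     (\<forall>u\<in>mcarrier V. \<forall>v\<in>mcarrier V. \<forall>w\<in>mcarrier V. madd V (madd V u v) w = madd V u (madd V v w)) \<and>
     (\<forall>v\<in>mcarrier V. \<forall>w\<in>mcarrier V. madd V v w = madd V w v) \<and>
     (\<forall>v\<in>mcarrier V. madd V (mzero V) v = v) \<and>
     (\<forall>v\<in>mcarrier V. \<exists>w\<in>mcarrier V. madd V v w = mzero V) \<and>
     (\<forall>a. \<forall>v\<in>mcarrier V. mact V a v \<in> mcarrier V) \<and>
     (\<forall>a b. \<forall>v\<in>mcarrier V. mact V (a + b) v = madd V (mact V a v) (mact V b v)) \<and>
     (\<forall>a. \<forall>v\<in>mcarrier V. \<forall>w\<in>mcarrier V. mact V a (madd V v w) = madd V (mact V a v) (mact V a w)) \<and>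
     (\<forall>a b. \<forall>v\<in>mcarrier V. mact V (a * b) v = mact V a (mact V b v)) \<and>
     (\<forall>v\<in>mcarrier V. mact V 1 v = v)"

definition submod :: "'v set \<Rightarrow> ('a::{ring,monoid_mult}, 'v) amod \<Rightarrow> bool" where
  "submod U V \<longleftrightarrow> U \<subseteq> mcarrier V \<and> is_amod (V\<lparr>mcarrier := U\<rparr>)"

definition amod_hom :: "('a::{ring,monoid_mult}, 'v) amod \<Rightarrow> ('a, 'w) amod \<Rightarrow> ('v \<Rightarrow> 'w) \<Rightarrow> bool" where
  "amod_hom V W f \<longleftrightarrow>
     (\<forall>v\<in>mcarrier V. f v \<in> mcarrier W) \<and>
     (\<forall>v\<in>mcarrier V. \<forall>w\<in>mcarrier V. f (madd V v w) = madd W (f v) (f w)) \<and>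
     (\<forall>a. \<forall>v\<in>mcarrier V. f (mact V a v) = mact W a (f v))"

definition simple_amod :: "('a::{ring,monoid_mult}, 'v) amod \<Rightarrow> bool" where
  "simple_amod V \<longleftrightarrow> is_amod V \<and> mcarrier V \<noteq> {mzero V} \<and>
     (\<forall>U. submod U V \<longrightarrow> U = {mzero V} \<or> U = mcarrier V)"

primrec lsum :: "('a, 'v) amod \<Rightarrow> 'v list \<Rightarrow> 'v" where
  "lsum V [] = mzero V"
| "lsum V (x # xs) = madd V x (lsum V xs)"

definition is_direct_sum :: "('a, 'v) amod \<Rightarrow> 'i set \<Rightarrow> ('i \<Rightarrow> 'v set) \<Rightarrow> bool" where
  "is_direct_sum V I F \<longleftrightarrow>
     (\<forall>i\<in>I. F i \<subseteq> mcarrier V) \<and>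
     (\<forall>v\<in>mcarrier V. \<exists>is f. distinct is \<and> set is \<subseteq> I \<and> (\<forall>i\<in>set is. f i \<in> F i)
                                \<and> v = lsum V (map f is)) \<and>
     (\<forall>is f. distinct is \<and> set is \<subseteq> I \<and> (\<forall>i\<in>set is. f i \<in> F i)
                \<and> lsum V (map f is) = mzero V \<longrightarrow> (\<forall>i\<in>set is. f i = mzero V))"

definition is_kalgebra :: "('k::field \<Rightarrow> 'a::{ring,monoid_mult} \<Rightarrow> 'a) \<Rightarrow> bool" where
  "is_kalgebra smult \<longleftrightarrow> vector_space smult \<and>
     (\<forall>c x y. smult c (x * y) = smult c x * y \<and> smult c (x * y) = x * smult c y)"

definition is_subalgebra :: "('k::field \<Rightarrow> 'a::{ring,monoid_mult} \<Rightarrow> 'a) \<Rightarrow> 'a set \<Rightarrow> bool" where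
  "is_subalgebra smult G \<longleftrightarrow> 1 \<in> G \<and> 0 \<in> G \<and>
     (\<forall>x\<in>G. \<forall>y\<in>G. x + y \<in> G \<and> x * y \<in> G) \<and> (\<forall>x\<in>G. - x \<in> G) \<and>
     (\<forall>c. \<forall>x\<in>G. smult c x \<in> G)"

definition is_ideal :: "'a::{ring,monoid_mult} set \<Rightarrow> 'a set \<Rightarrow> bool" where
  "is_ideal G I \<longleftrightarrow> I \<subseteq> G \<and> 0 \<in> I \<and> (\<forall>x\<in>I. \<forall>y\<in>I. x + y \<in> I) \<and> (\<forall>x\<in>I. - x \<in> I) \<and>
     (\<forall>g\<in>G. \<forall>x\<in>I. g * x \<in> I \<and> x * g \<in> I)"

definition max_ideal :: "'a::{ring,monoid_mult} set \<Rightarrow> 'a set \<Rightarrow> bool" where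
  "max_ideal G m \<longleftrightarrow> is_ideal G m \<and> m \<noteq> G \<and>
     (\<forall>J. is_ideal G J \<and> m \<subseteq> J \<longrightarrow> J = m \<or> J = G)"

text \<open>G/m is finite-dimensional over k: G is spanned modulo m by finitely many elements.\<close>
definition findim_quot :: "('k::field \<Rightarrow> 'a::{ring,monoid_mult} \<Rightarrow> 'a) \<Rightarrow> 'a set \<Rightarrow> 'a set \<Rightarrow> bool" where
  "findim_quot smult G m \<longleftrightarrow>
     (\<exists>F. finite F \<and> F \<subseteq> G \<and> (\<forall>g\<in>G. \<exists>y\<in>m. g - y \<in> module.span smult F))"

definition cfs :: "('k::field \<Rightarrow> 'a::{ring,monoid_mult} \<Rightarrow> 'a) \<Rightarrow> 'a set \<Rightarrow> 'a set set" where
  "cfs smult G = {m. max_ideal G m \<and> findim_quot smult G m}"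

inductive_set ideal_prod :: "'a::{ring,monoid_mult} set \<Rightarrow> 'a set \<Rightarrow> 'a set" for I J where
  ip_zero: "0 \<in> ideal_prod I J"
| ip_prod: "x \<in> I \<Longrightarrow> y \<in> J \<Longrightarrow> x * y \<in> ideal_prod I J"
| ip_add: "a \<in> ideal_prod I J \<Longrightarrow> b \<in> ideal_prod I J \<Longrightarrow> a + b \<in> ideal_prod I J"

inductive_set Wset :: "'a::{ring,monoid_mult} set \<Rightarrow> 'a set set \<Rightarrow> 'a set set" for G B where
  W_empty: "G \<in> Wset G B"
| W_step: "I \<in> Wset G B \<Longrightarrow> m \<in> B \<Longrightarrow> ideal_prod I m \<in> Wset G B"

inductive_set left_gen :: "'a::{ring,monoid_mult} set \<Rightarrow> 'a set" for N where
  lg_zero: "0 \<in> left_gen N"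
| lg_prod: "x \<in> N \<Longrightarrow> a * x \<in> left_gen N"
| lg_add: "u \<in> left_gen N \<Longrightarrow> v \<in> left_gen N \<Longrightarrow> u + v \<in> left_gen N"

definition quot_mod :: "'a::{ring,monoid_mult} set \<Rightarrow> ('a, 'a set) amod" where
  "quot_mod L = \<lparr> mcarrier = range (\<lambda>a. (\<lambda>n. a + n) ` L),
                  madd = (\<lambda>C D. {x + y | x y. x \<in> C \<and> y \<in> D}),
                  mzero = L,
                  mact = (\<lambda>a C. {x. \<exists>c\<in>C. x - a * c \<in> L}) \<rparr>"

definition classes :: "('k::field \<Rightarrow> 'a::{ring,monoid_mult} \<Rightarrow> 'a) \<Rightarrow> 'a set \<Rightarrow> ('a set \<times> 'a set) set \<Rightarrow> 'a set set set" where
  "classes smult G R = cfs smult G // R"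

definition blk :: "'a::{ring,monoid_mult} set \<Rightarrow> ('a, 'v) amod \<Rightarrow> 'a set set \<Rightarrow> 'v set" where
  "blk G V B = {v \<in> mcarrier V. \<exists>I\<in>Wset G B. \<forall>x\<in>I. mact V x v = mzero V}"

definition is_block_module :: "('k::field \<Rightarrow> 'a::{ring,monoid_mult} \<Rightarrow> 'a) \<Rightarrow> 'a set \<Rightarrow> ('a set \<times> 'a set) set \<Rightarrow> ('a, 'v) amod \<Rightarrow> bool" where
  "is_block_module smult G R V \<longleftrightarrow> is_direct_sum V (classes smult G R) (blk G V)"

definition Supp :: "('k::field \<Rightarrow> 'a::{ring,monoid_mult} \<Rightarrow> 'a) \<Rightarrow> 'a set \<Rightarrow> ('a set \<times> 'a set) set \<Rightarrow> ('a, 'v) amod \<Rightarrow> 'a set set set" where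
  "Supp smult G R V = {B \<in> classes smult G R. blk G V B \<noteq> {mzero V}}"

definition HC :: "('k::field \<Rightarrow> 'a::{ring,monoid_mult} \<Rightarrow> 'a) \<Rightarrow> 'a set \<Rightarrow> ('a set \<times> 'a set) set \<Rightarrow> ('a, 'v) amod \<Rightarrow> bool" where
  "HC smult G R V \<longleftrightarrow> is_amod V \<and> is_block_module smult G R V"

definition HC_D :: "('k::field \<Rightarrow> 'a::{ring,monoid_mult} \<Rightarrow> 'a) \<Rightarrow> 'a set \<Rightarrow> ('a set \<times> 'a set) set \<Rightarrow> 'a set set set \<Rightarrow> ('a, 'v) amod \<Rightarrow> bool" where
  "HC_D smult G R D V \<longleftrightarrow> HC smult G R V \<and> Supp smult G R V \<subseteq> D"

definition HC_block_subalgebra :: "('k::field \<Rightarrow> 'a::{ring,monoid_mult} \<Rightarrow> 'a) \<Rightarrow> 'a set \<Rightarrow> ('a set \<times> 'a set) set \<Rightarrow> bool" where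
  "HC_block_subalgebra smult G R \<longleftrightarrow>
     (\<forall>B\<in>classes smult G R. \<forall>I\<in>Wset G B. HC smult G R (quot_mod (left_gen I)))"

definition prec_base :: "('k::field \<Rightarrow> 'a::{ring,monoid_mult} \<Rightarrow> 'a) \<Rightarrow> 'a set \<Rightarrow> ('a set \<times> 'a set) set \<Rightarrow> ('a set set \<times> 'a set set) set" where
  "prec_base smult G R = {(B, C). B \<in> classes smult G R \<and> C \<in> classes smult G R \<and>
       (\<exists>m\<in>B. C \<in> Supp smult G R (quot_mod (left_gen m)))}"

definition prec :: "('k::field \<Rightarrow> 'a::{ring,monoid_mult} \<Rightarrow> 'a) \<Rightarrow> 'a set \<Rightarrow> ('a set \<times> 'a set) set \<Rightarrow> ('a set set \<times> 'a set set) set" where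
  "prec smult G R = Id_on (classes smult G R) \<union> (prec_base smult G R)\<^sup>+"

definition Delta :: "('k::field \<Rightarrow> 'a::{ring,monoid_mult} \<Rightarrow> 'a) \<Rightarrow> 'a set \<Rightarrow> ('a set \<times> 'a set) set \<Rightarrow> ('a set set \<times> 'a set set) set" where
  "Delta smult G R = Id_on (classes smult G R) \<union> (prec smult G R \<union> (prec smult G R)\<inverse>)\<^sup>+"

definition Nabla :: "('k::field \<Rightarrow> 'a::{ring,monoid_mult} \<Rightarrow> 'a) \<Rightarrow> 'a set \<Rightarrow> ('a set \<times> 'a set) set \<Rightarrow> ('a set set \<times> 'a set set) set" where
  "Nabla smult G R = prec smult G R \<inter> (prec smult G R)\<inverse>"

end

theory Submission
  imports Defs
begin

(* For v in a block V(B), the submodule A v lies in the sum of the blocks V(C) over the immediate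
   successors C of B, i.e. the classes C in Supp(A/Am) for some m in B.  This is proved by
   induction along an ideal product I in W(B) annihilating v.  For I = I' m the induction
   hypothesis, applied to the vectors y v with y in m, handles (Am) v.  Modulo Am an arbitrary
   a is a sum of elements b_i whose cosets are the block components of a + Am in the block module
   A/Am, so J b_i is contained in Am for some J in W(C_i), where C_i is a successor of B.  Then
   J b_i v lies in the sum over the successors, so every component of b_i v at a non-successor c
   is annihilated by J; it lies in V(C_i) and in V(c), hence vanishes.
   Consequently the sum V_D of the blocks in a Delta-class D is an A-submodule and V is the direct
   sum of the V_D; homomorphisms preserve blocks, so they vanish between modules with disjoint
   supports.  If V is simple, then A v = V for every nonzero v in V(B), so any two blocks in the
   support are successors of each other and the support lies in a single Nabla-class. *)

section \<open>Modules\<close>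

locale amodule =
  fixes V :: "('a::{ring,monoid_mult}, 'v) amod"
  assumes is_amod: "is_amod V"
begin

abbreviation madd_V (infixl "\<oplus>" 65) where "(\<oplus>) \<equiv> madd V"
abbreviation mact_V (infixr "\<cdot>" 75) where "(\<cdot>) \<equiv> mact V"

lemma mzero_closed [simp]: "mzero V \<in> mcarrier V"
  using is_amod unfolding is_amod_def by blast

lemma madd_closed [simp]: "v \<in> mcarrier V \<Longrightarrow> w \<in> mcarrier V \<Longrightarrow> v \<oplus> w \<in> mcarrier V"
  using is_amod unfolding is_amod_def by auto

lemma madd_assoc: "u \<in> mcarrier V \<Longrightarrow> v \<in> mcarrier V \<Longrightarrow> w \<in> mcarrier V \<Longrightarrow> (u \<oplus> v) \<oplus> w = u \<oplus> (v \<oplus> w)"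
  using is_amod unfolding is_amod_def by blast

lemma madd_commute: "v \<in> mcarrier V \<Longrightarrow> w \<in> mcarrier V \<Longrightarrow> v \<oplus> w = w \<oplus> v"
  using is_amod unfolding is_amod_def by blast

lemma mzero_left [simp]: "v \<in> mcarrier V \<Longrightarrow> mzero V \<oplus> v = v"
  using is_amod unfolding is_amod_def by blast

lemma madd_inverse: "v \<in> mcarrier V \<Longrightarrow> \<exists>w\<in>mcarrier V. v \<oplus> w = mzero V"
  using is_amod unfolding is_amod_def by blast

lemma mact_closed [simp]: "v \<in> mcarrier V \<Longrightarrow> a \<cdot> v \<in> mcarrier V"
  using is_amod unfolding is_amod_def by blast

lemma mact_add: "v \<in> mcarrier V \<Longrightarrow> (a + b) \<cdot> v = a \<cdot> v \<oplus> b \<cdot> v"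
  using is_amod unfolding is_amod_def by blast

lemma mact_madd: "v \<in> mcarrier V \<Longrightarrow> w \<in> mcarrier V \<Longrightarrow> a \<cdot> (v \<oplus> w) = a \<cdot> v \<oplus> a \<cdot> w"
  using is_amod unfolding is_amod_def by blast

lemma mact_mult: "v \<in> mcarrier V \<Longrightarrow> (a * b) \<cdot> v = a \<cdot> (b \<cdot> v)"
  using is_amod unfolding is_amod_def by blast

lemma mact_one [simp]: "v \<in> mcarrier V \<Longrightarrow> 1 \<cdot> v = v"
  using is_amod unfolding is_amod_def by blast

lemma mzero_right [simp]: "v \<in> mcarrier V \<Longrightarrow> v \<oplus> mzero V = v"
  using madd_commute mzero_left mzero_closed by metis

lemma madd_left_commute:
  "u \<in> mcarrier V \<Longrightarrow> v \<in> mcarrier V \<Longrightarrow> w \<in> mcarrier V \<Longrightarrow> u \<oplus> (v \<oplus> w) = v \<oplus> (u \<oplus> w)"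
  by (metis madd_assoc madd_commute)

lemma madd_idem_imp_mzero:
  assumes x: "x \<in> mcarrier V" and idem: "x \<oplus> x = x"
  shows "x = mzero V"
proof -
  obtain y where y: "y \<in> mcarrier V" "x \<oplus> y = mzero V"
    using madd_inverse x by blast
  have "x = x \<oplus> (x \<oplus> y)"
    using y x by simp
  also have "\<dots> = mzero V"
    using idem madd_assoc[OF x x y(1)] y(2) by simp
  finally show ?thesis .
qed

lemma mact_zero [simp]: "v \<in> mcarrier V \<Longrightarrow> 0 \<cdot> v = mzero V"
  by (rule madd_idem_imp_mzero) (auto simp: mact_add[symmetric])

lemma mact_mzero [simp]: "a \<cdot> mzero V = mzero V"
  by (rule madd_idem_imp_mzero) (auto simp: mact_madd[symmetric])

lemma madd_mact_neg [simp]: "v \<in> mcarrier V \<Longrightarrow> v \<oplus> (- 1) \<cdot> v = mzero V"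
  using mact_add[of v 1 "- 1"] by simp

lemma lsum_closed [simp]: "set xs \<subseteq> mcarrier V \<Longrightarrow> lsum V xs \<in> mcarrier V"
  by (induction xs) auto

lemma lsum_append:
  "set xs \<subseteq> mcarrier V \<Longrightarrow> set ys \<subseteq> mcarrier V \<Longrightarrow> lsum V (xs @ ys) = lsum V xs \<oplus> lsum V ys"
  by (induction xs) (auto simp: madd_assoc)

lemma lsum_mzero: "\<forall>x\<in>set xs. x = mzero V \<Longrightarrow> lsum V xs = mzero V"
  by (induction xs) auto

lemma mact_lsum: "set xs \<subseteq> mcarrier V \<Longrightarrow> a \<cdot> lsum V xs = lsum V (map ((\<cdot>) a) xs)"
  by (induction xs) (auto simp: mact_madd)

lemma sum_list_mact: "v \<in> mcarrier V \<Longrightarrow> sum_list (map b is) \<cdot> v = lsum V (map (\<lambda>i. b i \<cdot> v) is)"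
  by (induction "is") (auto simp: mact_add)

lemma lsum_remove1:
  assumes "i \<in> set is" "\<forall>j\<in>set is. f j \<in> mcarrier V"
  shows "lsum V (map f is) = f i \<oplus> lsum V (map f (remove1 i is))"
  using assms
proof (induction "is")
  case (Cons j "is")
  have "set (map f (remove1 i is)) \<subseteq> mcarrier V"
    using Cons.prems(2) set_remove1_subset by fastforce
  with Cons show ?case
    by (cases "i = j") (auto simp: madd_left_commute[of "f j"])
qed simp

lemma lsum_fun_upd:
  assumes "i \<in> set is" "distinct is" "\<forall>j\<in>set is. f j \<in> mcarrier V" "x \<in> mcarrier V"
  shows "x \<oplus> lsum V (map f is) = lsum V (map (f(i := x \<oplus> f i)) is)"
  using assms
proof (induction "is")
  case (Cons j "is")
  show ?case
  proof (cases "i = j")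
    case True
    then have "map (f(i := x \<oplus> f i)) (j # is) = (x \<oplus> f j) # map f is"
      using Cons.prems(2) by simp
    with True Cons.prems show ?thesis
      by (simp add: madd_assoc image_subset_iff del: fun_upd_apply)
  next
    case False
    with Cons show ?thesis
      by (simp add: madd_left_commute[of x] image_subset_iff)
  qed
qed simp

lemma madd_eq_imp_eq_diff:
  assumes "v \<in> mcarrier V" "w \<in> mcarrier V" "v \<oplus> w = s"
  shows "v = s \<oplus> (- 1) \<cdot> w"
proof -
  have "s \<oplus> (- 1) \<cdot> w = (v \<oplus> w) \<oplus> (- 1) \<cdot> w"
    using assms(3) by simp
  also have "\<dots> = v"
    using assms(1,2) by (simp add: madd_assoc)
  finally show ?thesis
    by simp
qed

lemma submodI:
  assumes "U \<subseteq> mcarrier V" "mzero V \<in> U"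
    and "\<And>u w. u \<in> U \<Longrightarrow> w \<in> U \<Longrightarrow> u \<oplus> w \<in> U"
    and "\<And>a u. u \<in> U \<Longrightarrow> a \<cdot> u \<in> U"
  shows "submod U V"
proof -
  have "\<exists>w\<in>U. v \<oplus> w = mzero V" if "v \<in> U" for v
    using that assms(1,4) madd_mact_neg by blast
  with assms show ?thesis
    unfolding submod_def is_amod_def
    by (auto simp: subset_iff mact_add mact_madd mact_mult intro: madd_assoc madd_commute)
qed

lemma cyclic_submod: "v \<in> mcarrier V \<Longrightarrow> submod (range (\<lambda>a. a \<cdot> v)) V"
  by (rule submodI) (auto simp: mact_add[symmetric] mact_mult[symmetric] intro: mact_zero[symmetric])

end

section \<open>Sums of families of subgroups\<close>

(* For F = blk G V and a Delta-class U this is the summand V_D of the theorem. *)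
definition family_sum :: "('a, 'v) amod \<Rightarrow> ('i \<Rightarrow> 'v set) \<Rightarrow> 'i set \<Rightarrow> 'v set" where
  "family_sum V F U =
     {lsum V (map f is) | is f. distinct is \<and> set is \<subseteq> U \<and> (\<forall>i\<in>set is. f i \<in> F i)}"

lemma family_sumI:
  "distinct is \<Longrightarrow> set is \<subseteq> U \<Longrightarrow> \<forall>i\<in>set is. f i \<in> F i \<Longrightarrow> lsum V (map f is) \<in> family_sum V F U"
  unfolding family_sum_def by blast

lemma family_sumE:
  assumes "s \<in> family_sum V F U"
  obtains "is" f where "distinct is" "set is \<subseteq> U" "\<forall>i\<in>set is. f i \<in> F i" "s = lsum V (map f is)"
  using assms unfolding family_sum_def by blast

lemma family_sum_mono: "U \<subseteq> U' \<Longrightarrow> family_sum V F U \<subseteq> family_sum V F U'"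
  unfolding family_sum_def by blast

lemma is_direct_sum_iff:
  "is_direct_sum V I F \<longleftrightarrow>
     (\<forall>i\<in>I. F i \<subseteq> mcarrier V) \<and> mcarrier V \<subseteq> family_sum V F I \<and>
     (\<forall>is f. distinct is \<and> set is \<subseteq> I \<and> (\<forall>i\<in>set is. f i \<in> F i) \<and> lsum V (map f is) = mzero V
        \<longrightarrow> (\<forall>i\<in>set is. f i = mzero V))"
proof -
  have "mcarrier V \<subseteq> family_sum V F I \<longleftrightarrow>
      (\<forall>v\<in>mcarrier V. \<exists>is f. distinct is \<and> set is \<subseteq> I \<and> (\<forall>i\<in>set is. f i \<in> F i) \<and> v = lsum V (map f is))"
    unfolding family_sum_def by blast
  then show ?thesis
    unfolding is_direct_sum_def by (simp only:)
qed

lemma direct_sum_carrier_family_sum: "is_direct_sum V I F \<Longrightarrow> mcarrier V \<subseteq> family_sum V F I"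
  unfolding is_direct_sum_iff by (elim conjE)

locale subgroup_family = amodule V for V :: "('a::{ring,monoid_mult}, 'v) amod" +
  fixes K :: "'i set" and F :: "'i \<Rightarrow> 'v set"
  assumes summand_subset: "i \<in> K \<Longrightarrow> F i \<subseteq> mcarrier V"
    and mzero_summand: "i \<in> K \<Longrightarrow> mzero V \<in> F i"
    and madd_summand: "i \<in> K \<Longrightarrow> x \<in> F i \<Longrightarrow> y \<in> F i \<Longrightarrow> x \<oplus> y \<in> F i"
    and neg_summand: "i \<in> K \<Longrightarrow> x \<in> F i \<Longrightarrow> (- 1) \<cdot> x \<in> F i"
begin

lemma summand_carrier: "i \<in> K \<Longrightarrow> x \<in> F i \<Longrightarrow> x \<in> mcarrier V"
  using summand_subset by blast

lemma summands_carrier: "set is \<subseteq> K \<Longrightarrow> \<forall>i\<in>set is. f i \<in> F i \<Longrightarrow> set (map f is) \<subseteq> mcarrier V"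
  using summand_carrier by auto

lemma family_sum_subset:
  assumes U: "U \<subseteq> K"
  shows "family_sum V F U \<subseteq> mcarrier V"
proof
  fix s
  assume "s \<in> family_sum V F U"
  then obtain "is" f where f: "set is \<subseteq> U" "\<forall>i\<in>set is. f i \<in> F i" "s = lsum V (map f is)"
    by (rule family_sumE)
  have "set (map f is) \<subseteq> mcarrier V"
    using summands_carrier[of "is" f] f U by blast
  with f show "s \<in> mcarrier V"
    by simp
qed

lemma mzero_family_sum [simp]: "mzero V \<in> family_sum V F U"
proof -
  have "lsum V (map (\<lambda>_. mzero V) ([] :: 'i list)) \<in> family_sum V F U"
    by (rule family_sumI) auto
  then show ?thesis
    by simp
qed

lemma family_sum_summand:
  assumes "i \<in> U" "i \<in> K" "x \<in> F i"
  shows "x \<in> family_sum V F U"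
proof -
  have "lsum V (map (\<lambda>_. x) [i]) \<in> family_sum V F U"
    using assms by (intro family_sumI) auto
  with assms summand_carrier show ?thesis
    by simp
qed

lemma family_sum_madd_summand:
  assumes U: "U \<subseteq> K" and i: "i \<in> U" "x \<in> F i" and s: "s \<in> family_sum V F U"
  shows "x \<oplus> s \<in> family_sum V F U"
proof -
  obtain "is" f where f: "distinct is" "set is \<subseteq> U" "\<forall>i\<in>set is. f i \<in> F i" "s = lsum V (map f is)"
    using s by (rule family_sumE)
  have "set (map f is) \<subseteq> mcarrier V"
    using summands_carrier[of "is" f] f U by blast
  then have fC: "\<forall>j\<in>set is. f j \<in> mcarrier V"
    by auto
  have xC: "x \<in> mcarrier V"
    using i U summand_carrier by blast
  show ?thesis
  proof (cases "i \<in> set is")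
    case True
    have "x \<oplus> s = lsum V (map (f(i := x \<oplus> f i)) is)"
      using f fC xC True by (simp add: lsum_fun_upd)
    moreover have "\<forall>j\<in>set is. (f(i := x \<oplus> f i)) j \<in> F j"
      using f i U True by (auto intro: madd_summand)
    ultimately show ?thesis
      using f by (simp add: family_sumI)
  next
    case False
    have "x \<oplus> s = lsum V (map (f(i := x)) (i # is))"
      using f False by simp
    moreover have "lsum V (map (f(i := x)) (i # is)) \<in> family_sum V F U"
      by (rule family_sumI) (use f i False in auto)
    ultimately show ?thesis
      by simp
  qed
qed

lemma family_sum_madd:
  assumes U: "U \<subseteq> K" and s: "s \<in> family_sum V F U" and t: "t \<in> family_sum V F U"
  shows "s \<oplus> t \<in> family_sum V F U"
proof -
  obtain ts h where h: "set ts \<subseteq> U" "\<forall>i\<in>set ts. h i \<in> F i" "t = lsum V (map h ts)"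
    using t by (rule family_sumE)
  have "s \<oplus> lsum V (map h ts) \<in> family_sum V F U"
    using h(1,2)
  proof (induction ts)
    case Nil
    show ?case
      using s family_sum_subset[OF U] by auto
  next
    case (Cons j ts)
    have "set (map h (j # ts)) \<subseteq> mcarrier V"
      using summands_carrier[of "j # ts" h] Cons.prems U by blast
    then have C: "s \<in> mcarrier V" "h j \<in> mcarrier V" "lsum V (map h ts) \<in> mcarrier V"
      using s family_sum_subset[OF U] by auto
    have "s \<oplus> lsum V (map h (j # ts)) = h j \<oplus> (s \<oplus> lsum V (map h ts))"
      using C by (simp add: madd_left_commute)
    moreover have "h j \<oplus> (s \<oplus> lsum V (map h ts)) \<in> family_sum V F U"
      using family_sum_madd_summand[OF U, of j "h j"] Cons by simp
    ultimately show ?case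
      by simp
  qed
  with h show ?thesis
    by simp
qed

lemma family_sum_lsum: "U \<subseteq> K \<Longrightarrow> set xs \<subseteq> family_sum V F U \<Longrightarrow> lsum V xs \<in> family_sum V F U"
  by (induction xs) (auto intro: family_sum_madd)

lemma lsum_family_sums:
  assumes "\<forall>D\<in>set Ds. D \<subseteq> K \<and> h D \<in> family_sum V F D"
  shows "lsum V (map h Ds) \<in> family_sum V F (\<Union> (set Ds))"
proof (rule family_sum_lsum)
  show "\<Union> (set Ds) \<subseteq> K"
    using assms by blast
  have "h D \<in> family_sum V F (\<Union> (set Ds))" if "D \<in> set Ds" for D
    using that assms family_sum_mono[of D "\<Union> (set Ds)" V F] by blast
  then show "set (map h Ds) \<subseteq> family_sum V F (\<Union> (set Ds))"
    by auto
qed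

lemma family_sum_neg:
  assumes U: "U \<subseteq> K" and s: "s \<in> family_sum V F U"
  shows "(- 1) \<cdot> s \<in> family_sum V F U"
proof -
  obtain "is" f where f: "distinct is" "set is \<subseteq> U" "\<forall>i\<in>set is. f i \<in> F i" "s = lsum V (map f is)"
    using s by (rule family_sumE)
  have "set (map f is) \<subseteq> mcarrier V"
    using summands_carrier[of "is" f] f U by blast
  then have "(- 1) \<cdot> s = lsum V (map (\<lambda>i. (- 1) \<cdot> f i) is)"
    using f(4) by (simp add: mact_lsum comp_def)
  moreover have "\<forall>i\<in>set is. (- 1) \<cdot> f i \<in> F i"
    using f U neg_summand by blast
  ultimately show ?thesis
    using f by (simp add: family_sumI)
qed

lemma subgroup_family_family_sum: "(\<And>D. D \<in> P \<Longrightarrow> D \<subseteq> K) \<Longrightarrow> subgroup_family V P (family_sum V F)"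
  by unfold_locales (auto intro: family_sum_madd family_sum_neg dest: family_sum_subset)

end

lemma lsum_carrier_update [simp]: "lsum (V\<lparr>mcarrier := X\<rparr>) xs = lsum V xs"
  by (induction xs) auto

lemma family_sum_carrier_update [simp]: "family_sum (V\<lparr>mcarrier := X\<rparr>) F U = family_sum V F U"
  unfolding family_sum_def by simp

locale direct_sum = subgroup_family +
  assumes direct: "is_direct_sum V K F"
begin

lemma carrier_family_sum: "mcarrier V \<subseteq> family_sum V F K"
  using direct by (rule direct_sum_carrier_family_sum)

lemma summands_independent:
  assumes "distinct is" "set is \<subseteq> K" "\<forall>i\<in>set is. f i \<in> F i" "lsum V (map f is) = mzero V"
    and "i \<in> set is"
  shows "f i = mzero V"
  using direct[unfolded is_direct_sum_def, THEN conjunct2, THEN conjunct2] assms by blast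

lemma family_sum_disjoint:
  assumes U: "U \<subseteq> K" "U' \<subseteq> K" "U \<inter> U' = {}"
    and u: "u \<in> family_sum V F U" "u \<in> family_sum V F U'"
  shows "u = mzero V"
proof -
  obtain cs g where g: "distinct cs" "set cs \<subseteq> U" "\<forall>i\<in>set cs. g i \<in> F i" "u = lsum V (map g cs)"
    using u(1) by (rule family_sumE)
  obtain ts h where h: "distinct ts" "set ts \<subseteq> U'" "\<forall>i\<in>set ts. h i \<in> F i" "u = lsum V (map h ts)"
    using u(2) by (rule family_sumE)
  have csK: "set cs \<subseteq> K" and tsK: "set ts \<subseteq> K"
    using g(2) h(2) U by auto
  define f where "f i = (if i \<in> set cs then g i else (- 1) \<cdot> h i)" for i
  have gC: "set (map g cs) \<subseteq> mcarrier V" and hC: "set (map h ts) \<subseteq> mcarrier V"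
    using summands_carrier[of cs g] summands_carrier[of ts h] g h U by blast+
  have disj: "set cs \<inter> set ts = {}"
    using g(2) h(2) U(3) by blast
  have fmap: "map f (cs @ ts) = map g cs @ map ((\<cdot>) (- 1)) (map h ts)"
    using disj unfolding f_def by auto
  have hC': "set (map ((\<cdot>) (- 1)) (map h ts)) \<subseteq> mcarrier V"
    using hC by auto
  have "lsum V (map f (cs @ ts)) = lsum V (map g cs) \<oplus> lsum V (map ((\<cdot>) (- 1)) (map h ts))"
    unfolding fmap using gC hC' by (rule lsum_append)
  also have "\<dots> = u \<oplus> (- 1) \<cdot> u"
    using g(4) h(4) mact_lsum[OF hC] by simp
  also have "\<dots> = mzero V"
    using gC g(4) by simp
  finally have sum0: "lsum V (map f (cs @ ts)) = mzero V" .
  have "f i \<in> F i" if "i \<in> set (cs @ ts)" for i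
    using that g h csK tsK unfolding f_def by (auto intro!: neg_summand)
  then have "f i = mzero V" if "i \<in> set cs" for i
    using summands_independent[OF _ _ _ sum0] that g h csK tsK disj by auto
  then have "\<forall>i\<in>set cs. g i = mzero V"
    unfolding f_def by auto
  then show ?thesis
    using g(4) by (simp add: lsum_mzero)
qed

lemma summand_family_sum_disjoint:
  assumes "U \<subseteq> K" "i \<in> K - U" "x \<in> F i" "x \<in> family_sum V F U"
  shows "x = mzero V"
proof (rule family_sum_disjoint)
  show "x \<in> family_sum V F {i}"
    using assms by (intro family_sum_summand) auto
qed (use assms in auto)

lemma component_outside_family_sum:
  assumes U: "U \<subseteq> K" and g: "distinct cs" "set cs \<subseteq> K" "\<forall>i\<in>set cs. g i \<in> F i"
    and s: "lsum V (map g cs) \<in> family_sum V F U" and c: "c \<in> set cs" "c \<notin> U"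
  shows "g c = mzero V"
proof -
  let ?r = "lsum V (map g (remove1 c cs))"
  have gC: "\<forall>i\<in>set cs. g i \<in> mcarrier V"
    using summands_carrier[of cs g] g by auto
  have r: "?r \<in> family_sum V F (set cs - {c})"
    using g by (intro family_sumI) (auto simp: set_remove1_eq)
  have rC: "?r \<in> mcarrier V"
    using r g family_sum_subset[of "set cs - {c}"] by blast
  have UK: "U \<union> (set cs - {c}) \<subseteq> K"
    using U g by blast
  have "g c \<oplus> ?r = lsum V (map g cs)"
    using lsum_remove1[OF c(1) gC] by simp
  then have "g c = lsum V (map g cs) \<oplus> (- 1) \<cdot> ?r"
    using gC c rC by (intro madd_eq_imp_eq_diff) auto
  also have "\<dots> \<in> family_sum V F (U \<union> (set cs - {c}))"
  proof -
    have "lsum V (map g cs) \<in> family_sum V F (U \<union> (set cs - {c}))"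
      using s family_sum_mono[of U "U \<union> (set cs - {c})" V F] by auto
    moreover have "?r \<in> family_sum V F (U \<union> (set cs - {c}))"
      using r family_sum_mono[of "set cs - {c}" "U \<union> (set cs - {c})" V F] by auto
    ultimately show ?thesis
      using family_sum_madd[OF UK] family_sum_neg[OF UK] by blast
  qed
  finally show ?thesis
    using UK g c by (intro summand_family_sum_disjoint[of "U \<union> (set cs - {c})" c]) auto
qed

lemma nontrivial_summand:
  assumes "mcarrier V \<noteq> {mzero V}"
  shows "\<exists>i\<in>K. F i \<noteq> {mzero V}"
proof (rule ccontr)
  assume trivial: "\<not> ?thesis"
  have "v = mzero V" if "v \<in> mcarrier V" for v
  proof -
    have "v \<in> family_sum V F K"
      using carrier_family_sum that by blast
    then obtain "is" f where f: "set is \<subseteq> K" "\<forall>i\<in>set is. f i \<in> F i" "v = lsum V (map f is)"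
      by (rule family_sumE)
    with trivial have "\<forall>x\<in>set (map f is). x = mzero V"
      by fastforce
    with f show ?thesis
      by (simp add: lsum_mzero)
  qed
  with assms mzero_closed show False
    by blast
qed

lemma subgroup_family_classes: "equiv K E \<Longrightarrow> subgroup_family V (K // E) (family_sum V F)"
  by (rule subgroup_family_family_sum) (rule in_quotient_imp_subset)

lemma carrier_family_sum_classes:
  assumes E: "equiv K E" and v: "v \<in> mcarrier V"
  shows "v \<in> family_sum V (family_sum V F) (K // E)"
proof -
  interpret coarse: subgroup_family V "K // E" "family_sum V F"
    using E by (rule subgroup_family_classes)
  have "v \<in> family_sum V F K"
    using v carrier_family_sum by blast
  then obtain "is" f where f: "set is \<subseteq> K" "\<forall>i\<in>set is. f i \<in> F i" "v = lsum V (map f is)"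
    by (rule family_sumE)
  have "f i \<in> family_sum V (family_sum V F) (K // E)" if i: "i \<in> set is" for i
  proof -
    have iK: "i \<in> K"
      using f i by blast
    then have cls: "E `` {i} \<in> K // E"
      by (rule quotientI)
    have "f i \<in> family_sum V F (E `` {i})"
      using equiv_class_self[OF E iK] iK f i by (intro family_sum_summand) auto
    then show ?thesis
      using cls by (intro coarse.family_sum_summand)
  qed
  then have "set (map f is) \<subseteq> family_sum V (family_sum V F) (K // E)"
    by auto
  then show ?thesis
    unfolding f(3) by (intro coarse.family_sum_lsum) simp_all
qed

lemma family_sum_classes_independent:
  assumes E: "equiv K E"
    and Ds: "distinct Ds" "set Ds \<subseteq> K // E" "\<forall>D\<in>set Ds. h D \<in> family_sum V F D"
    and sum0: "lsum V (map h Ds) = mzero V" and D: "D \<in> set Ds"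
  shows "h D = mzero V"
proof -
  let ?rest = "remove1 D Ds"
  let ?U = "\<Union> (set ?rest)"
  have classes_sub: "X \<subseteq> K" if "X \<in> set Ds" for X
    using in_quotient_imp_subset[OF E] Ds(2) that by blast
  have rest_sub: "set ?rest \<subseteq> set Ds"
    by (rule set_remove1_subset)
  have UK: "?U \<subseteq> K"
    using rest_sub classes_sub by blast
  have rest: "lsum V (map h ?rest) \<in> family_sum V F ?U"
    using rest_sub Ds(3) classes_sub by (intro lsum_family_sums) blast
  have "D \<inter> D' = {}" if "D' \<in> set ?rest" for D'
    using quotient_disj[OF E] Ds(1,2) D that rest_sub by fastforce
  then have disj: "D \<inter> ?U = {}"
    by blast
  have hC: "\<forall>D'\<in>set Ds. h D' \<in> mcarrier V"
    using Ds(3) classes_sub family_sum_subset by blast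
  have rC: "lsum V (map h ?rest) \<in> mcarrier V"
    using rest family_sum_subset[OF UK] by blast
  have "h D \<oplus> lsum V (map h ?rest) = mzero V"
    using sum0 lsum_remove1[OF D hC] by simp
  then have "h D = mzero V \<oplus> (- 1) \<cdot> lsum V (map h ?rest)"
    using hC D rC by (intro madd_eq_imp_eq_diff) auto
  also have "\<dots> \<in> family_sum V F ?U"
    using family_sum_neg[OF UK rest] rC by simp
  finally show ?thesis
    using family_sum_disjoint[OF classes_sub[OF D] UK disj] Ds D by blast
qed

lemma direct_sum_coarsening:
  assumes E: "equiv K E"
  shows "is_direct_sum V (K // E) (family_sum V F)"
proof -
  interpret coarse: subgroup_family V "K // E" "family_sum V F"
    using E by (rule subgroup_family_classes)
  show ?thesis
    unfolding is_direct_sum_iff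
    using carrier_family_sum_classes[OF E] family_sum_classes_independent[OF E]
    by (intro conjI subsetI ballI allI impI) (auto intro: coarse.summand_carrier)
qed

lemma direct_sum_restrict:
  assumes D: "D \<subseteq> K"
  shows "is_direct_sum (V\<lparr>mcarrier := family_sum V F D\<rparr>) K (\<lambda>i. F i \<inter> family_sum V F D)"
proof -
  have "s \<in> family_sum V (\<lambda>i. F i \<inter> family_sum V F D) K" if "s \<in> family_sum V F D" for s
  proof -
    obtain "is" f where f: "distinct is" "set is \<subseteq> D" "\<forall>i\<in>set is. f i \<in> F i" "s = lsum V (map f is)"
      using \<open>s \<in> family_sum V F D\<close> by (rule family_sumE)
    have isK: "set is \<subseteq> K"
      using f D by blast
    then have "\<forall>i\<in>set is. f i \<in> F i \<inter> family_sum V F D"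
      using f by (auto intro: family_sum_summand)
    with f isK show ?thesis
      by (simp add: family_sumI)
  qed
  then show ?thesis
    unfolding is_direct_sum_iff by (auto intro: summands_independent)
qed

end

section \<open>Products of ideals and left ideals\<close>

lemma is_idealD:
  assumes "is_ideal G I"
  shows "I \<subseteq> G" and "0 \<in> I" and "x \<in> I \<Longrightarrow> y \<in> I \<Longrightarrow> x + y \<in> I" and "x \<in> I \<Longrightarrow> - x \<in> I"
    and "g \<in> G \<Longrightarrow> x \<in> I \<Longrightarrow> g * x \<in> I" and "g \<in> G \<Longrightarrow> x \<in> I \<Longrightarrow> x * g \<in> I"
  using assms unfolding is_ideal_def apply - by blast+

lemma ideal_prod_mono: "I \<subseteq> I' \<Longrightarrow> ideal_prod I J \<subseteq> ideal_prod I' J"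
proof
  fix x
  assume "I \<subseteq> I'" "x \<in> ideal_prod I J"
  then show "x \<in> ideal_prod I' J"
    by (induction rule: ideal_prod.induct[OF \<open>x \<in> ideal_prod I J\<close>]) (auto intro: ideal_prod.intros)
qed

lemma ideal_prod_subset:
  assumes I: "is_ideal G I" and J: "J \<subseteq> G"
  shows "ideal_prod I J \<subseteq> I"
proof
  fix x
  assume "x \<in> ideal_prod I J"
  then show "x \<in> I"
  proof induction
    case ip_zero
    then show ?case
      using is_idealD(2)[OF I] .
  next
    case (ip_prod x y)
    then show ?case
      using is_idealD(6)[OF I] J by blast
  next
    case (ip_add a b)
    then show ?case
      using is_idealD(3)[OF I] by blast
  qed
qed

lemma ideal_prod_is_ideal:
  assumes I: "is_ideal G I" and J: "is_ideal G J"
  shows "is_ideal G (ideal_prod I J)"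
proof -
  have sub: "ideal_prod I J \<subseteq> G"
    using ideal_prod_subset[OF I is_idealD(1)[OF J]] is_idealD(1)[OF I] by blast
  have neg: "- x \<in> ideal_prod I J" if "x \<in> ideal_prod I J" for x
    using that
  proof induction
    case (ip_prod x y)
    then show ?case
      using is_idealD(4)[OF I] ideal_prod.ip_prod[of "- x" I y J] by simp
  next
    case (ip_add a b)
    then show ?case
      using ideal_prod.ip_add[of "- a" I J "- b"] by simp
  qed (simp add: ideal_prod.ip_zero)
  have mult: "g * x \<in> ideal_prod I J \<and> x * g \<in> ideal_prod I J" if g: "g \<in> G" and x: "x \<in> ideal_prod I J" for g x
    using x
  proof induction
    case (ip_prod x y)
    have "g * x \<in> I" "y * g \<in> J"
      using ip_prod g is_idealD(5)[OF I] is_idealD(6)[OF J] by blast+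
    then show ?case
      using ip_prod ideal_prod.ip_prod[of "g * x" I y J] ideal_prod.ip_prod[of x I "y * g" J]
      by (simp add: mult.assoc)
  next
    case (ip_add a b)
    then show ?case
      by (simp add: distrib_left distrib_right ideal_prod.ip_add)
  qed (simp add: ideal_prod.ip_zero)
  show ?thesis
    unfolding is_ideal_def using sub neg mult by (blast intro: ideal_prod.intros)
qed

lemma Wset_ideal:
  assumes "I \<in> Wset G B" "is_ideal G G" "\<forall>m\<in>B. is_ideal G m"
  shows "is_ideal G I"
  using assms by induction (simp_all add: ideal_prod_is_ideal)

lemma Wset_lower_bound:
  assumes I: "I \<in> Wset G B" and J: "J \<in> Wset G B" and G: "is_ideal G G" and B: "\<forall>m\<in>B. is_ideal G m"
  shows "\<exists>L\<in>Wset G B. L \<subseteq> I \<and> L \<subseteq> J"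
  using I
proof induction
  case W_empty
  show ?case
    using J is_idealD(1)[OF Wset_ideal[OF J G B]] by blast
next
  case (W_step I m)
  then obtain L where L: "L \<in> Wset G B" "L \<subseteq> I" "L \<subseteq> J"
    by blast
  have "m \<subseteq> G"
    using B W_step(2) is_idealD(1) by blast
  with Wset_ideal[OF L(1) G B] have "ideal_prod L m \<subseteq> L"
    by (rule ideal_prod_subset)
  moreover have "ideal_prod L m \<in> Wset G B"
    using L(1) W_step(2) by (rule Wset.W_step)
  ultimately show ?case
    using L(3) ideal_prod_mono[OF L(2), of m] by blast
qed

lemma left_gen_mult: "x \<in> left_gen N \<Longrightarrow> a * x \<in> left_gen N"
proof (induction rule: left_gen.induct)
  case lg_zero
  then show ?case
    by (simp add: left_gen.lg_zero)
next
  case (lg_prod x b)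
  then show ?case
    using left_gen.lg_prod[of x N "a * b"] by (simp add: mult.assoc)
next
  case (lg_add u v)
  then show ?case
    by (simp add: distrib_left left_gen.lg_add)
qed

lemma left_gen_diff: "x \<in> left_gen N \<Longrightarrow> y \<in> left_gen N \<Longrightarrow> x - y \<in> left_gen N"
  using left_gen.lg_add[of x N "(- 1) * y"] left_gen_mult[of y N "- 1"] by simp

lemma left_gen_subset:
  assumes "N \<subseteq> left_gen M"
  shows "left_gen N \<subseteq> left_gen M"
proof
  fix x
  assume "x \<in> left_gen N"
  then show "x \<in> left_gen M"
  proof induction
    case (lg_prod x a)
    then show ?case
      using assms left_gen_mult by blast
  qed (simp_all add: left_gen.lg_zero left_gen.lg_add)
qed

lemma left_gen_ideal_prod:
  assumes "1 \<in> G"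
  shows "left_gen (ideal_prod G m) = left_gen m"
proof (rule antisym; rule left_gen_subset; rule subsetI)
  fix x
  assume "x \<in> ideal_prod G m"
  then show "x \<in> left_gen m"
    by induction (simp_all add: left_gen.intros)
next
  fix x
  assume "x \<in> m"
  then have "1 * x \<in> ideal_prod G m"
    using assms by (rule ideal_prod.ip_prod[rotated])
  then show "x \<in> left_gen (ideal_prod G m)"
    using left_gen.lg_prod[of x "ideal_prod G m" 1] by simp
qed

section \<open>Quotients by left ideals\<close>

definition coset :: "'a::{ring,monoid_mult} set \<Rightarrow> 'a \<Rightarrow> 'a set" where
  "coset L a = (\<lambda>n. a + n) ` L"

lemma mem_coset_left_gen: "x \<in> coset (left_gen N) a \<longleftrightarrow> x - a \<in> left_gen N"
  unfolding coset_def by (auto simp: image_iff) (metis add_diff_cancel_left' diff_add_cancel add.commute)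

lemma coset_left_gen_eq_iff: "coset (left_gen N) a = coset (left_gen N) b \<longleftrightarrow> a - b \<in> left_gen N"
proof
  assume "coset (left_gen N) a = coset (left_gen N) b"
  moreover have "a \<in> coset (left_gen N) a"
    by (simp add: mem_coset_left_gen left_gen.lg_zero)
  ultimately show "a - b \<in> left_gen N"
    by (simp add: mem_coset_left_gen)
next
  assume ab: "a - b \<in> left_gen N"
  have "x - a \<in> left_gen N \<longleftrightarrow> x - b \<in> left_gen N" for x
    using left_gen.lg_add[OF _ ab, of "x - a"] left_gen_diff[OF _ ab, of "x - b"] by auto
  then show "coset (left_gen N) a = coset (left_gen N) b"
    by (auto simp: mem_coset_left_gen)
qed

lemma quot_mod_carrier: "mcarrier (quot_mod L) = range (coset L)"
  unfolding quot_mod_def coset_def by simp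

lemma quot_mod_mzero: "mzero (quot_mod L) = L"
  unfolding quot_mod_def by simp

lemma coset_zero: "coset L 0 = L"
  unfolding coset_def by simp

lemma quot_mod_madd:
  "madd (quot_mod (left_gen N)) (coset (left_gen N) a) (coset (left_gen N) b) = coset (left_gen N) (a + b)"
proof -
  have "{x + y |x y. x \<in> coset (left_gen N) a \<and> y \<in> coset (left_gen N) b} = coset (left_gen N) (a + b)"
  proof (intro set_eqI iffI)
    fix w
    assume "w \<in> {x + y |x y. x \<in> coset (left_gen N) a \<and> y \<in> coset (left_gen N) b}"
    then obtain x y where "w = x + y" "x - a \<in> left_gen N" "y - b \<in> left_gen N"
      by (auto simp: mem_coset_left_gen)
    then show "w \<in> coset (left_gen N) (a + b)"
      using left_gen.lg_add[of "x - a" N "y - b"] by (simp add: mem_coset_left_gen algebra_simps)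
  next
    fix w
    assume "w \<in> coset (left_gen N) (a + b)"
    then have "w - b \<in> coset (left_gen N) a" "b \<in> coset (left_gen N) b"
      by (auto simp: mem_coset_left_gen algebra_simps intro: left_gen.lg_zero)
    then show "w \<in> {x + y |x y. x \<in> coset (left_gen N) a \<and> y \<in> coset (left_gen N) b}"
      by (metis (mono_tags, lifting) diff_add_cancel mem_Collect_eq)
  qed
  then show ?thesis
    unfolding quot_mod_def by simp
qed

lemma quot_mod_lsum:
  "lsum (quot_mod (left_gen N)) (map (\<lambda>i. coset (left_gen N) (b i)) is) = coset (left_gen N) (sum_list (map b is))"
  by (induction "is") (simp_all add: quot_mod_madd quot_mod_mzero coset_zero)

lemma quot_mod_mact: "mact (quot_mod (left_gen N)) x (coset (left_gen N) b) = coset (left_gen N) (x * b)"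
proof -
  have "(\<exists>c. c - b \<in> left_gen N \<and> y - x * c \<in> left_gen N) \<longleftrightarrow> y - x * b \<in> left_gen N" for y
  proof
    assume "\<exists>c. c - b \<in> left_gen N \<and> y - x * c \<in> left_gen N"
    then obtain c where "c - b \<in> left_gen N" "y - x * c \<in> left_gen N"
      by blast
    then have "(y - x * c) + x * (c - b) \<in> left_gen N"
      by (simp add: left_gen.lg_add left_gen_mult)
    then show "y - x * b \<in> left_gen N"
      by (simp add: algebra_simps)
  next
    assume "y - x * b \<in> left_gen N"
    then show "\<exists>c. c - b \<in> left_gen N \<and> y - x * c \<in> left_gen N"
      by (intro exI[of _ b]) (simp add: left_gen.lg_zero)
  qed
  then show ?thesis
    unfolding quot_mod_def by (simp add: set_eq_iff Bex_def mem_coset_left_gen)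
qed

lemma coset_eq_left_gen: "coset (left_gen N) a = left_gen N \<longleftrightarrow> a \<in> left_gen N"
  using coset_left_gen_eq_iff[of N a 0] by (simp add: coset_zero)

lemma coset_in_blk_quot_mod:
  "coset (left_gen N) b \<in> blk G (quot_mod (left_gen N)) i \<longleftrightarrow> (\<exists>J\<in>Wset G i. \<forall>x\<in>J. x * b \<in> left_gen N)"
proof -
  have "coset (left_gen N) b \<in> mcarrier (quot_mod (left_gen N))"
    by (simp add: quot_mod_carrier)
  moreover have "mact (quot_mod (left_gen N)) x (coset (left_gen N) b) = mzero (quot_mod (left_gen N))
      \<longleftrightarrow> x * b \<in> left_gen N" for x
    by (simp add: quot_mod_mact quot_mod_mzero coset_eq_left_gen)
  ultimately show ?thesis
    unfolding blk_def by simp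
qed

lemma quot_mod_block_decomposition:
  assumes ds: "is_direct_sum (quot_mod (left_gen N)) K (blk G (quot_mod (left_gen N)))"
  obtains "is" b where "set is \<subseteq> K" and "a - sum_list (map b is) \<in> left_gen N"
    and "\<forall>i\<in>set is. b i \<in> left_gen N \<or>
           (blk G (quot_mod (left_gen N)) i \<noteq> {left_gen N} \<and> (\<exists>J\<in>Wset G i. \<forall>x\<in>J. x * b i \<in> left_gen N))"
proof -
  let ?L = "left_gen N" and ?X = "quot_mod (left_gen N)"
  have "coset ?L a \<in> mcarrier ?X"
    by (simp add: quot_mod_carrier)
  then have "coset ?L a \<in> family_sum ?X (blk G ?X) K"
    using direct_sum_carrier_family_sum[OF ds] by blast
  then obtain "is" f where f: "set is \<subseteq> K" "\<forall>i\<in>set is. f i \<in> blk G ?X i" "coset ?L a = lsum ?X (map f is)"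
    by (rule family_sumE)
  have "\<forall>i\<in>set is. \<exists>c. f i = coset ?L c"
    using f(2) unfolding blk_def quot_mod_carrier by blast
  then obtain b where b: "\<forall>i\<in>set is. f i = coset ?L (b i)"
    by metis
  then have map_eq: "map f is = map (\<lambda>i. coset ?L (b i)) is"
    by simp
  have "coset ?L a = coset ?L (sum_list (map b is))"
    using f(3) unfolding map_eq quot_mod_lsum .
  then have sum: "a - sum_list (map b is) \<in> ?L"
    by (simp add: coset_left_gen_eq_iff)
  have "b i \<in> ?L \<or> (blk G ?X i \<noteq> {?L} \<and> (\<exists>J\<in>Wset G i. \<forall>x\<in>J. x * b i \<in> ?L))" if i: "i \<in> set is" for i
  proof -
    have in_blk: "coset ?L (b i) \<in> blk G ?X i"
      using f(2) b i by simp
    then have "blk G ?X i = {?L} \<Longrightarrow> b i \<in> ?L"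
      by (simp add: coset_eq_left_gen)
    with in_blk show ?thesis
      unfolding coset_in_blk_quot_mod by blast
  qed
  with f(1) sum that show ?thesis
    by blast
qed

section \<open>Block spaces\<close>

context amodule
begin

lemma mzero_blk: "mzero V \<in> blk G V B"
  unfolding blk_def by (auto intro: Wset.W_empty)

lemma blk_mact:
  assumes G: "is_ideal G G" and B: "\<forall>m\<in>B. is_ideal G m" and x: "x \<in> G" and v: "v \<in> blk G V B"
  shows "x \<cdot> v \<in> blk G V B"
proof -
  obtain I where I: "I \<in> Wset G B" "\<forall>y\<in>I. y \<cdot> v = mzero V" and vC: "v \<in> mcarrier V"
    using v unfolding blk_def by blast
  have "y * x \<in> I" if "y \<in> I" for y
    using is_idealD(6)[OF Wset_ideal[OF I(1) G B] x that] .
  with I vC have "\<forall>y\<in>I. y \<cdot> (x \<cdot> v) = mzero V"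
    by (simp add: mact_mult[symmetric])
  with I(1) vC show ?thesis
    unfolding blk_def by auto
qed

lemma blk_madd:
  assumes G: "is_ideal G G" and B: "\<forall>m\<in>B. is_ideal G m" and v: "v \<in> blk G V B" and w: "w \<in> blk G V B"
  shows "v \<oplus> w \<in> blk G V B"
proof -
  obtain I where I: "I \<in> Wset G B" "\<forall>y\<in>I. y \<cdot> v = mzero V" and vC: "v \<in> mcarrier V"
    using v unfolding blk_def by blast
  obtain J where J: "J \<in> Wset G B" "\<forall>y\<in>J. y \<cdot> w = mzero V" and wC: "w \<in> mcarrier V"
    using w unfolding blk_def by blast
  obtain L where L: "L \<in> Wset G B" "L \<subseteq> I" "L \<subseteq> J"
    using Wset_lower_bound[OF I(1) J(1) G B] by blast
  with I J have "\<forall>y\<in>L. y \<cdot> v = mzero V \<and> y \<cdot> w = mzero V"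
    by blast
  with vC wC have "\<forall>y\<in>L. y \<cdot> (v \<oplus> w) = mzero V"
    by (simp add: mact_madd)
  with L(1) vC wC show ?thesis
    unfolding blk_def by auto
qed

lemma blk_neg:
  assumes G: "is_ideal G G" and B: "\<forall>m\<in>B. is_ideal G m" and v: "v \<in> blk G V B"
  shows "(- 1) \<cdot> v \<in> blk G V B"
proof -
  obtain I where I: "I \<in> Wset G B" "\<forall>y\<in>I. y \<cdot> v = mzero V" and vC: "v \<in> mcarrier V"
    using v unfolding blk_def by blast
  have "- y \<in> I" if "y \<in> I" for y
    using is_idealD(4)[OF Wset_ideal[OF I(1) G B] that] .
  with I vC have "\<forall>y\<in>I. y \<cdot> ((- 1) \<cdot> v) = mzero V"
    by (simp add: mact_mult[symmetric])
  with I(1) vC show ?thesis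
    unfolding blk_def by auto
qed

lemma left_gen_mact_closed:
  assumes v: "v \<in> mcarrier V" and S: "mzero V \<in> S" "\<And>u w. u \<in> S \<Longrightarrow> w \<in> S \<Longrightarrow> u \<oplus> w \<in> S"
    and N: "\<And>y c. y \<in> N \<Longrightarrow> c \<cdot> (y \<cdot> v) \<in> S" and l: "l \<in> left_gen N"
  shows "l \<cdot> v \<in> S"
  using l
proof induction
  case (lg_prod y c)
  then show ?case
    using N v by (simp add: mact_mult)
qed (use v S in \<open>simp_all add: mact_add\<close>)

lemma subgroup_family_blk:
  assumes "is_ideal G G" and "\<And>B. B \<in> K \<Longrightarrow> \<forall>m\<in>B. is_ideal G m"
  shows "subgroup_family V K (blk G V)"
proof
  show "blk G V B \<subseteq> mcarrier V" for B
    unfolding blk_def by blast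
qed (use assms in \<open>simp_all add: mzero_blk blk_madd blk_neg\<close>)

end

lemma amod_hom_mzero:
  assumes "is_amod V" "is_amod W" "amod_hom V W f"
  shows "f (mzero V) = mzero W"
proof -
  interpret V: amodule V by (rule amodule.intro) fact
  interpret W: amodule W by (rule amodule.intro) fact
  have "f (mzero V) = f (mact V 0 (mzero V))"
    by simp
  also have "\<dots> = mact W 0 (f (mzero V))"
    using assms(3) V.mzero_closed unfolding amod_hom_def by blast
  also have "\<dots> = mzero W"
    using assms(3) V.mzero_closed unfolding amod_hom_def by (blast intro: W.mact_zero)
  finally show ?thesis .
qed

lemma amod_hom_lsum:
  assumes "is_amod V" "is_amod W" "amod_hom V W f" "set xs \<subseteq> mcarrier V"
  shows "f (lsum V xs) = lsum W (map f xs)"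
  using assms(4)
proof (induction xs)
  case Nil
  then show ?case
    using amod_hom_mzero[OF assms(1-3)] by simp
next
  case (Cons x xs)
  interpret V: amodule V by (rule amodule.intro) fact
  from Cons show ?case
    using assms(3) unfolding amod_hom_def by simp
qed

lemma amod_hom_blk:
  assumes "is_amod V" "is_amod W" "amod_hom V W f" "v \<in> blk G V B"
  shows "f v \<in> blk G W B"
proof -
  obtain I where I: "I \<in> Wset G B" "\<forall>x\<in>I. mact V x v = mzero V" and vC: "v \<in> mcarrier V"
    using assms(4) unfolding blk_def by blast
  have hom: "\<forall>a. f (mact V a v) = mact W a (f v)" "f v \<in> mcarrier W"
    using assms(3) vC unfolding amod_hom_def by blast+
  then have "\<forall>x\<in>I. mact W x (f v) = mzero W"
    using I(2) amod_hom_mzero[OF assms(1-3)] by metis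
  with I(1) hom(2) show ?thesis
    unfolding blk_def by blast
qed

lemma blk_carrier_update: "X \<subseteq> mcarrier V \<Longrightarrow> blk G (V\<lparr>mcarrier := X\<rparr>) B = blk G V B \<inter> X"
  unfolding blk_def by auto

lemma simple_nontrivial: "simple_amod V \<Longrightarrow> mcarrier V \<noteq> {mzero V}"
  unfolding simple_amod_def by (rule conjunct1[OF conjunct2])

section \<open>Harish-Chandra block subalgebras\<close>

lemma preorder_on_Id_on_trancl:
  assumes "P \<subseteq> A \<times> A"
  shows "preorder_on A (Id_on A \<union> P\<^sup>+)"
proof -
  have sub: "P\<^sup>+ \<subseteq> A \<times> A"
    using assms by (rule trancl_subset_Sigma)
  have "trans (Id_on A \<union> P\<^sup>+)"
    unfolding trans_def using sub by (blast intro: trancl_trans)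
  with sub show ?thesis
    unfolding preorder_on_def refl_on_def by blast
qed

lemma equiv_Id_on_sym_trancl:
  assumes "P \<subseteq> A \<times> A"
  shows "equiv A (Id_on A \<union> (P \<union> P\<inverse>)\<^sup>+)"
proof -
  have "preorder_on A (Id_on A \<union> (P \<union> P\<inverse>)\<^sup>+)"
    using assms by (intro preorder_on_Id_on_trancl) blast
  moreover have "sym ((P \<union> P\<inverse>)\<^sup>+)"
    by (rule sym_trancl) (auto simp: sym_def)
  then have "sym (Id_on A \<union> (P \<union> P\<inverse>)\<^sup>+)"
    unfolding sym_def by blast
  ultimately show ?thesis
    unfolding preorder_on_def equiv_def by blast
qed

lemma equiv_Int_converse:
  assumes "preorder_on A P"
  shows "equiv A (P \<inter> P\<inverse>)"
  using assms unfolding preorder_on_def equiv_def refl_on_def sym_def trans_def by blast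

locale hc_setting =
  fixes smult :: "'k::field \<Rightarrow> 'a::{ring,monoid_mult} \<Rightarrow> 'a"
    and G :: "'a set"
    and R :: "('a set \<times> 'a set) set"
  assumes subalgebra: "is_subalgebra smult G"
    and equiv_R: "equiv (cfs smult G) R"
    and HC_block: "HC_block_subalgebra smult G R"
begin

abbreviation "cls \<equiv> classes smult G R"

lemma ideal_G: "is_ideal G G"
  using subalgebra unfolding is_subalgebra_def is_ideal_def by blast

lemma one_G: "1 \<in> G"
  using subalgebra unfolding is_subalgebra_def by blast

lemma class_ideals: "B \<in> cls \<Longrightarrow> \<forall>m\<in>B. is_ideal G m"
  using in_quotient_imp_subset[OF equiv_R] unfolding classes_def cfs_def max_ideal_def by blast

lemma HC_direct_sum:
  assumes "HC smult G R V"
  shows "direct_sum V cls (blk G V)"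
proof -
  have V: "is_amod V" and ds: "is_direct_sum V cls (blk G V)"
    using assms unfolding HC_def is_block_module_def by blast+
  interpret amodule V
    using V by (rule amodule.intro)
  have "subgroup_family V cls (blk G V)"
    using ideal_G class_ideals by (rule subgroup_family_blk)
  with ds show ?thesis
    by (simp add: direct_sum_def direct_sum_axioms_def)
qed

lemma prec_base_subset: "prec_base smult G R \<subseteq> cls \<times> cls"
  unfolding prec_base_def by blast

lemma preorder_prec: "preorder_on cls (prec smult G R)"
  unfolding prec_def using prec_base_subset by (rule preorder_on_Id_on_trancl)

lemma equiv_Delta: "equiv cls (Delta smult G R)"
  unfolding Delta_def using preorder_prec unfolding preorder_on_def by (intro equiv_Id_on_sym_trancl) blast

lemma equiv_Nabla: "equiv cls (Nabla smult G R)"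
  unfolding Nabla_def using preorder_prec by (rule equiv_Int_converse)

lemma prec_base_prec: "(B, C) \<in> prec_base smult G R \<Longrightarrow> (B, C) \<in> prec smult G R"
  unfolding prec_def by blast

lemma Delta_class_closed:
  assumes "D \<in> cls // Delta smult G R" "B \<in> D" "(B, C) \<in> prec_base smult G R"
  shows "C \<in> D"
proof -
  have "(B, C) \<in> Delta smult G R"
    using prec_base_prec[OF assms(3)] unfolding Delta_def by blast
  with assms(1,2) show ?thesis
    by (rule in_quotient_imp_closed[OF equiv_Delta])
qed

(* The only use of the Harish-Chandra block hypothesis: A/Am is a block module. *)
lemma quotient_decomposition:
  assumes B: "B \<in> cls" and m: "m \<in> B"
  obtains "is" b where "a - sum_list (map b is) \<in> left_gen m"
    and "\<forall>i\<in>set is. b i \<in> left_gen m \<or>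
           ((B, i) \<in> prec_base smult G R \<and> (\<exists>J\<in>Wset G i. \<forall>x\<in>J. x * b i \<in> left_gen m))"
proof -
  let ?X = "quot_mod (left_gen m)"
  have "ideal_prod G m \<in> Wset G B"
    using m by (intro Wset.intros)
  then have "HC smult G R (quot_mod (left_gen (ideal_prod G m)))"
    using HC_block B unfolding HC_block_subalgebra_def by blast
  then have "HC smult G R ?X"
    by (simp only: left_gen_ideal_prod[OF one_G])
  then have ds: "is_direct_sum ?X cls (blk G ?X)"
    unfolding HC_def is_block_module_def by (rule conjunct2)
  obtain "is" b where is_cls: "set is \<subseteq> cls" and sum: "a - sum_list (map b is) \<in> left_gen m"
    and comp: "\<forall>i\<in>set is. b i \<in> left_gen m \<or>
           (blk G ?X i \<noteq> {left_gen m} \<and> (\<exists>J\<in>Wset G i. \<forall>x\<in>J. x * b i \<in> left_gen m))"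
    by (rule quot_mod_block_decomposition[OF ds, where a = a])
  have "(B, i) \<in> prec_base smult G R" if "i \<in> set is" "blk G ?X i \<noteq> {left_gen m}" for i
  proof -
    have "i \<in> Supp smult G R ?X"
      using that is_cls unfolding Supp_def quot_mod_mzero by blast
    with B m is_cls that(1) show ?thesis
      unfolding prec_base_def by blast
  qed
  with comp have "\<forall>i\<in>set is. b i \<in> left_gen m \<or>
      ((B, i) \<in> prec_base smult G R \<and> (\<exists>J\<in>Wset G i. \<forall>x\<in>J. x * b i \<in> left_gen m))"
    by blast
  with sum show thesis
    by (rule that)
qed

lemma hom_vanishes_if_Supp_disjoint:
  assumes V: "HC smult G R V" and W: "HC smult G R W" and f: "amod_hom V W f"
    and disj: "Supp smult G R V \<inter> Supp smult G R W = {}" and v: "v \<in> mcarrier V"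
  shows "f v = mzero W"
proof -
  interpret V: direct_sum V cls "blk G V"
    using V by (rule HC_direct_sum)
  interpret W: direct_sum W cls "blk G W"
    using W by (rule HC_direct_sum)
  have "v \<in> family_sum V (blk G V) cls"
    using v V.carrier_family_sum by blast
  then obtain "is" g where g: "set is \<subseteq> cls" "\<forall>i\<in>set is. g i \<in> blk G V i" "v = lsum V (map g is)"
    by (rule family_sumE)
  have "f (g i) = mzero W" if i: "i \<in> set is" for i
  proof (cases "i \<in> Supp smult G R V")
    case True
    then have "blk G W i = {mzero W}"
      using disj g(1) i unfolding Supp_def by blast
    then show ?thesis
      using amod_hom_blk[OF V.is_amod W.is_amod f] g(2) i by blast
  next
    case False
    then have "g i = mzero V"
      using g i unfolding Supp_def by blast
    then show ?thesis
      using amod_hom_mzero[OF V.is_amod W.is_amod f] by simp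
  qed
  moreover have "f v = lsum W (map f (map g is))"
    using amod_hom_lsum[OF V.is_amod W.is_amod f V.summands_carrier[OF g(1,2)]] g(3) by simp
  ultimately show ?thesis
    by (simp add: W.lsum_mzero)
qed

end

locale hc_module = hc_setting smult G R
  for smult :: "'k::field \<Rightarrow> 'a::{ring,monoid_mult} \<Rightarrow> 'a" and G R +
  fixes V :: "('a, 'v) amod"
  assumes HC_V: "HC smult G R V"

sublocale hc_module \<subseteq> direct_sum V cls "blk G V"
  using HC_V by (rule HC_direct_sum)

context hc_module
begin

abbreviation succs :: "'a set set \<Rightarrow> 'a set set set" where
  "succs B \<equiv> {C. (B, C) \<in> prec_base smult G R}"

lemma annihilated_component_in_blk:
  assumes T: "T \<subseteq> cls" and J: "J \<in> Wset G i" "i \<in> cls"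
    and g: "distinct cs" "set cs \<subseteq> cls" "\<forall>c\<in>set cs. g c \<in> blk G V c"
    and Jw: "\<forall>x\<in>J. x \<cdot> lsum V (map g cs) \<in> family_sum V (blk G V) T"
    and c: "c \<in> set cs" "c \<notin> T"
  shows "g c \<in> blk G V i"
proof -
  have gC: "set (map g cs) \<subseteq> mcarrier V"
    using g(2,3) by (rule summands_carrier)
  have JG: "J \<subseteq> G"
    using is_idealD(1)[OF Wset_ideal[OF J(1) ideal_G class_ideals[OF J(2)]]] .
  have "x \<cdot> g c = mzero V" if x: "x \<in> J" for x
  proof (rule component_outside_family_sum[OF T g(1,2) _ _ c])
    show "\<forall>c\<in>set cs. x \<cdot> g c \<in> blk G V c"
      using g(2,3) x JG ideal_G class_ideals by (blast intro: blk_mact)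
    have "x \<cdot> lsum V (map g cs) = lsum V (map (\<lambda>c. x \<cdot> g c) cs)"
      using gC by (simp add: mact_lsum comp_def)
    with Jw x show "lsum V (map (\<lambda>c. x \<cdot> g c) cs) \<in> family_sum V (blk G V) T"
      by auto
  qed
  with J(1) gC c(1) show ?thesis
    unfolding blk_def by auto
qed

(* The components of w outside T are annihilated by J, so they lie in V(i) and vanish. *)
lemma family_sum_annihilated:
  assumes T: "T \<subseteq> cls" "i \<in> T" and J: "J \<in> Wset G i" and w: "w \<in> mcarrier V"
    and Jw: "\<forall>x\<in>J. x \<cdot> w \<in> family_sum V (blk G V) T"
  shows "w \<in> family_sum V (blk G V) T"
proof -
  have "w \<in> family_sum V (blk G V) cls"
    using w carrier_family_sum by blast
  then obtain cs g where g: "distinct cs" "set cs \<subseteq> cls" "\<forall>c\<in>set cs. g c \<in> blk G V c"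
    and w_eq: "w = lsum V (map g cs)"
    by (rule family_sumE)
  have "g c \<in> family_sum V (blk G V) T" if c: "c \<in> set cs" for c
  proof (cases "c \<in> T")
    case True
    then show ?thesis
      using c g by (intro family_sum_summand) auto
  next
    case False
    have "g c \<in> blk G V i"
      using annihilated_component_in_blk[OF T(1) J _ g] T Jw c False unfolding w_eq by blast
    moreover have "i \<in> cls - {c}"
      using T False by auto
    moreover have "g c \<in> family_sum V (blk G V) {c}"
      using g c by (intro family_sum_summand) auto
    ultimately have "g c = mzero V"
      using g(2) c by (intro summand_family_sum_disjoint[of "{c}" i]) auto
    then show ?thesis
      by simp
  qed
  then have "set (map g cs) \<subseteq> family_sum V (blk G V) T"
    by auto
  then show ?thesis
    unfolding w_eq using T(1) by (intro family_sum_lsum)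
qed

lemma mact_in_succs_if_left_gen:
  assumes B: "B \<in> cls" and m: "m \<in> B" and v: "v \<in> mcarrier V"
    and left_gen_m: "\<And>l. l \<in> left_gen m \<Longrightarrow> l \<cdot> v \<in> family_sum V (blk G V) (succs B)"
  shows "a \<cdot> v \<in> family_sum V (blk G V) (succs B)"
proof -
  let ?S = "family_sum V (blk G V) (succs B)"
  have succs_cls: "succs B \<subseteq> cls"
    using prec_base_subset by blast
  obtain "is" b where sum: "a - sum_list (map b is) \<in> left_gen m"
    and comp: "\<forall>i\<in>set is. b i \<in> left_gen m \<or>
           ((B, i) \<in> prec_base smult G R \<and> (\<exists>J\<in>Wset G i. \<forall>x\<in>J. x * b i \<in> left_gen m))"
    by (rule quotient_decomposition[OF B m, where a = a])
  have "b i \<cdot> v \<in> ?S" if i: "i \<in> set is" for i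
  proof (cases "b i \<in> left_gen m")
    case True
    then show ?thesis
      by (rule left_gen_m)
  next
    case False
    with comp i obtain J where "(B, i) \<in> prec_base smult G R" "J \<in> Wset G i"
      and "\<forall>x\<in>J. x * b i \<in> left_gen m"
      by blast
    with left_gen_m v succs_cls show ?thesis
      by (intro family_sum_annihilated[of "succs B" i J]) (auto simp: mact_mult[symmetric])
  qed
  then have "lsum V (map (\<lambda>i. b i \<cdot> v) is) \<in> ?S"
    using succs_cls by (intro family_sum_lsum) auto
  moreover have "a \<cdot> v = (a - sum_list (map b is)) \<cdot> v \<oplus> lsum V (map (\<lambda>i. b i \<cdot> v) is)"
    using v mact_add[of v "a - sum_list (map b is)" "sum_list (map b is)"] by (simp add: sum_list_mact)
  ultimately show ?thesis
    using left_gen_m[OF sum] succs_cls by (simp add: family_sum_madd)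
qed

lemma mact_annihilated_in_succs:
  assumes B: "B \<in> cls" and I: "I \<in> Wset G B"
  shows "v \<in> mcarrier V \<Longrightarrow> \<forall>x\<in>I. x \<cdot> v = mzero V \<Longrightarrow> a \<cdot> v \<in> family_sum V (blk G V) (succs B)"
  using I
proof (induction arbitrary: v a)
  case W_empty
  then have "v = mzero V"
    using one_G by (metis mact_one)
  then show ?case
    by simp
next
  case (W_step I m v a)
  note v = W_step.prems(1)
  show ?case
  proof (rule mact_in_succs_if_left_gen[OF B W_step.hyps(2) v])
    fix l
    assume "l \<in> left_gen m"
    then show "l \<cdot> v \<in> family_sum V (blk G V) (succs B)"
    proof (rule left_gen_mact_closed[OF v, rotated 3])
      show "u \<oplus> w \<in> family_sum V (blk G V) (succs B)"
        if "u \<in> family_sum V (blk G V) (succs B)" "w \<in> family_sum V (blk G V) (succs B)" for u w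
        using prec_base_subset that by (intro family_sum_madd) blast+
      show "c \<cdot> (y \<cdot> v) \<in> family_sum V (blk G V) (succs B)" if y: "y \<in> m" for y c
      proof -
        have "x \<cdot> (y \<cdot> v) = mzero V" if "x \<in> I" for x
          using W_step.prems(2) ideal_prod.ip_prod[OF that y] v by (simp add: mact_mult[symmetric])
        then show ?thesis
          using W_step.IH v by simp
      qed
    qed simp
  qed
qed

lemma mact_blk_in_succs:
  assumes "B \<in> cls" "v \<in> blk G V B"
  shows "a \<cdot> v \<in> family_sum V (blk G V) (succs B)"
  using assms(2) mact_annihilated_in_succs[OF assms(1)] unfolding blk_def by blast

lemma Delta_class_submod:
  assumes D: "D \<in> cls // Delta smult G R"
  shows "submod (family_sum V (blk G V) D) V"
proof (rule submodI)
  have DK: "D \<subseteq> cls"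
    using equiv_Delta D by (rule in_quotient_imp_subset)
  show "family_sum V (blk G V) D \<subseteq> mcarrier V"
    using DK by (rule family_sum_subset)
  show "mzero V \<in> family_sum V (blk G V) D"
    by simp
  show "u \<oplus> w \<in> family_sum V (blk G V) D"
    if "u \<in> family_sum V (blk G V) D" "w \<in> family_sum V (blk G V) D" for u w
    using DK that by (rule family_sum_madd)
  show "a \<cdot> s \<in> family_sum V (blk G V) D" if s: "s \<in> family_sum V (blk G V) D" for a s
  proof -
    obtain "is" f where f: "set is \<subseteq> D" "\<forall>i\<in>set is. f i \<in> blk G V i" "s = lsum V (map f is)"
      using s by (rule family_sumE)
    have is_cls: "set is \<subseteq> cls"
      using f(1) DK by blast
    have "a \<cdot> f i \<in> family_sum V (blk G V) D" if i: "i \<in> set is" for i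
    proof -
      have "a \<cdot> f i \<in> family_sum V (blk G V) (succs i)"
        using is_cls f(2) i by (intro mact_blk_in_succs) auto
      moreover have "succs i \<subseteq> D"
        using Delta_class_closed[OF D] f(1) i by blast
      ultimately show ?thesis
        using family_sum_mono[of "succs i" D V "blk G V"] by blast
    qed
    then have "set (map ((\<cdot>) a) (map f is)) \<subseteq> family_sum V (blk G V) D"
      by auto
    moreover have "a \<cdot> s = lsum V (map ((\<cdot>) a) (map f is))"
      unfolding f(3) using summands_carrier[OF is_cls f(2)] by (rule mact_lsum)
    ultimately show ?thesis
      using DK by (simp add: family_sum_lsum)
  qed
qed

lemma Delta_class_HC_D:
  assumes D: "D \<in> cls // Delta smult G R"
  shows "HC_D smult G R D (V\<lparr>mcarrier := family_sum V (blk G V) D\<rparr>)"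
proof -
  let ?S = "family_sum V (blk G V) D"
  let ?W = "V\<lparr>mcarrier := ?S\<rparr>"
  have DK: "D \<subseteq> cls"
    using equiv_Delta D by (rule in_quotient_imp_subset)
  have blk_W: "blk G ?W i = blk G V i \<inter> ?S" for i
    using family_sum_subset[OF DK] by (rule blk_carrier_update)
  have "is_amod ?W"
    using Delta_class_submod[OF D] unfolding submod_def by (rule conjunct2)
  moreover have "is_block_module smult G R ?W"
    unfolding is_block_module_def blk_W using direct_sum_restrict[OF DK] by simp
  moreover have "Supp smult G R ?W \<subseteq> D"
  proof
    fix C
    assume "C \<in> Supp smult G R ?W"
    then obtain u where C: "C \<in> cls" and u: "u \<in> blk G V C" "u \<in> ?S" "u \<noteq> mzero V"
      unfolding Supp_def blk_W using mzero_blk by auto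
    show "C \<in> D"
    proof (rule ccontr)
      assume "C \<notin> D"
      then have "u = mzero V"
        using DK C u(1,2) by (intro summand_family_sum_disjoint[of D C]) auto
      with u(3) show False ..
    qed
  qed
  ultimately show ?thesis
    unfolding HC_D_def HC_def by blast
qed

lemma Supp_nonempty:
  assumes "mcarrier V \<noteq> {mzero V}"
  shows "Supp smult G R V \<noteq> {}"
proof -
  obtain B where "B \<in> cls" "blk G V B \<noteq> {mzero V}"
    using nontrivial_summand[OF assms] by blast
  then have "B \<in> Supp smult G R V"
    unfolding Supp_def by simp
  then show ?thesis
    by blast
qed

lemma simple_Supp_prec_base:
  assumes simple: "simple_amod V" and B: "B \<in> Supp smult G R V" and C: "C \<in> Supp smult G R V"
  shows "(B, C) \<in> prec_base smult G R"
proof -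
  obtain v where B_cls: "B \<in> cls" and v: "v \<in> blk G V B" "v \<noteq> mzero V"
    using B mzero_blk unfolding Supp_def by blast
  obtain u where C_cls: "C \<in> cls" and u: "u \<in> blk G V C" "u \<noteq> mzero V"
    using C mzero_blk unfolding Supp_def by blast
  have vC: "v \<in> mcarrier V"
    using v(1) unfolding blk_def by blast
  have "v \<in> range (\<lambda>a. a \<cdot> v)"
    using vC mact_one by (metis rangeI)
  then have "range (\<lambda>a. a \<cdot> v) = mcarrier V"
    using simple cyclic_submod[OF vC] v(2) unfolding simple_amod_def by blast
  moreover have "u \<in> mcarrier V"
    using u(1) unfolding blk_def by blast
  ultimately obtain a where "u = a \<cdot> v"
    by blast
  then have "u \<in> family_sum V (blk G V) (succs B)"
    using mact_blk_in_succs[OF B_cls v(1)] by simp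
  show ?thesis
  proof (rule ccontr)
    assume "(B, C) \<notin> prec_base smult G R"
    with C_cls have "C \<in> cls - succs B"
      by blast
    with u(1) \<open>u \<in> family_sum V (blk G V) (succs B)\<close> have "u = mzero V"
      using prec_base_subset by (intro summand_family_sum_disjoint) auto
    with u(2) show False ..
  qed
qed

end

context hc_setting
begin

lemma hc_module: "HC smult G R V \<Longrightarrow> hc_module smult G R V"
  by (rule hc_module.intro[OF hc_setting_axioms]) (rule hc_module_axioms.intro)

lemma HC_Delta_decomposition:
  assumes "HC smult G R V"
  shows "\<exists>VD. (\<forall>D \<in> cls // Delta smult G R. submod (VD D) V \<and> HC_D smult G R D (V\<lparr>mcarrier := VD D\<rparr>))
           \<and> is_direct_sum V (cls // Delta smult G R) VD"
proof -
  interpret hc_module smult G R V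
    using assms by (rule hc_module)
  show ?thesis
    by (intro exI[of _ "family_sum V (blk G V)"] conjI ballI Delta_class_submod Delta_class_HC_D
        direct_sum_coarsening equiv_Delta)
qed

lemma HC_D_hom_vanishes:
  assumes D: "D \<in> cls // Delta smult G R" "D' \<in> cls // Delta smult G R" "D \<noteq> D'"
    and V: "HC_D smult G R D V" and W: "HC_D smult G R D' W" and f: "amod_hom V W f"
    and v: "v \<in> mcarrier V"
  shows "f v = mzero W"
proof (rule hom_vanishes_if_Supp_disjoint[OF _ _ f _ v])
  show "HC smult G R V"
    using V unfolding HC_D_def by (rule conjunct1)
  show "HC smult G R W"
    using W unfolding HC_D_def by (rule conjunct1)
  have "D \<inter> D' = {}"
    using quotient_disj[OF equiv_Delta D(1,2)] D(3) by blast
  moreover have "Supp smult G R V \<subseteq> D"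
    using V unfolding HC_D_def by (rule conjunct2)
  moreover have "Supp smult G R W \<subseteq> D'"
    using W unfolding HC_D_def by (rule conjunct2)
  ultimately show "Supp smult G R V \<inter> Supp smult G R W = {}"
    by blast
qed

lemma simple_HC_in_Nabla_class:
  assumes simple: "simple_amod V" and HC: "HC smult G R V"
  shows "\<exists>D \<in> cls // Nabla smult G R. HC_D smult G R D V"
proof -
  interpret hc_module smult G R V
    using HC by (rule hc_module)
  obtain B where B: "B \<in> Supp smult G R V"
    using Supp_nonempty[OF simple_nontrivial[OF simple]] by blast
  have "C \<in> Nabla smult G R `` {B}" if C: "C \<in> Supp smult G R V" for C
  proof -
    have "(B, C) \<in> prec smult G R" "(C, B) \<in> prec smult G R"
      using prec_base_prec[OF simple_Supp_prec_base[OF simple B C]]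
        prec_base_prec[OF simple_Supp_prec_base[OF simple C B]] .
    then show ?thesis
      unfolding Nabla_def by blast
  qed
  moreover have "Nabla smult G R `` {B} \<in> cls // Nabla smult G R"
    using B unfolding Supp_def by (blast intro: quotientI)
  ultimately show ?thesis
    using HC unfolding HC_D_def by blast
qed

lemma simple_HC_iff_Nabla_class:
  "(simple_amod V \<and> HC smult G R V) \<longleftrightarrow> (\<exists>D \<in> cls // Nabla smult G R. simple_amod V \<and> HC_D smult G R D V)"
  using simple_HC_in_Nabla_class[of V] unfolding HC_D_def by blast

lemma simple_HC_D_Nabla_unique:
  assumes D: "D \<in> cls // Nabla smult G R" "D' \<in> cls // Nabla smult G R" "D \<noteq> D'"
    and simple: "simple_amod V" and V: "HC_D smult G R D V"
  shows "\<not> HC_D smult G R D' V"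
proof
  assume V': "HC_D smult G R D' V"
  have "HC smult G R V"
    using V unfolding HC_D_def by (rule conjunct1)
  then interpret hc_module smult G R V
    by (rule hc_module)
  have "D \<inter> D' = {}"
    using quotient_disj[OF equiv_Nabla D(1,2)] D(3) by blast
  moreover have "Supp smult G R V \<subseteq> D"
    using V unfolding HC_D_def by (rule conjunct2)
  moreover have "Supp smult G R V \<subseteq> D'"
    using V' unfolding HC_D_def by (rule conjunct2)
  ultimately have "Supp smult G R V = {}"
    by blast
  with Supp_nonempty[OF simple_nontrivial[OF simple]] show False ..
qed

end

theorem mainTheorem1:
  fixes smult :: "'k::field \<Rightarrow> 'a::{ring,monoid_mult} \<Rightarrow> 'a"
    and G :: "'a set"
    and R :: "('a set \<times> 'a set) set"
  assumes "is_kalgebra smult"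
    and "is_subalgebra smult G"
    and "equiv (cfs smult G) R"
    and "HC_block_subalgebra smult G R"
  shows
    "(\<forall>V :: ('a, 'v) amod. HC smult G R V \<longrightarrow>
        (\<exists>VD. (\<forall>D \<in> classes smult G R // Delta smult G R.
                  submod (VD D) V \<and> HC_D smult G R D (V\<lparr>mcarrier := VD D\<rparr>))
              \<and> is_direct_sum V (classes smult G R // Delta smult G R) VD))
     \<and> (\<forall>D \<in> classes smult G R // Delta smult G R. \<forall>D' \<in> classes smult G R // Delta smult G R.
          D \<noteq> D' \<longrightarrow>
          (\<forall>(V :: ('a, 'v) amod) (W :: ('a, 'w) amod) f.
              HC_D smult G R D V \<and> HC_D smult G R D' W \<and> amod_hom V W f
              \<longrightarrow> (\<forall>v \<in> mcarrier V. f v = mzero W)))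
     \<and> (\<forall>V :: ('a, 'u) amod.
          (simple_amod V \<and> HC smult G R V) \<longleftrightarrow>
          (\<exists>D \<in> classes smult G R // Nabla smult G R. simple_amod V \<and> HC_D smult G R D V))
     \<and> (\<forall>D \<in> classes smult G R // Nabla smult G R. \<forall>D' \<in> classes smult G R // Nabla smult G R.
          D \<noteq> D' \<longrightarrow>
          (\<forall>V :: ('a, 'u) amod. \<not> (simple_amod V \<and> HC_D smult G R D V \<and> HC_D smult G R D' V)))"
proof -
  \<comment> \<open>Only the ring structures of A and G enter.\<close>
  interpret hc_setting smult G R
    using assms(2-4) by (rule hc_setting.intro)
  show ?thesis
  proof (intro conjI allI ballI impI)
    fix V :: "('a, 'v) amod"
    assume "HC smult G R V"
    then show "\<exists>VD. (\<forall>D \<in> cls // Delta smult G R. submod (VD D) V \<and> HC_D smult G R D (V\<lparr>mcarrier := VD D\<rparr>))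
                \<and> is_direct_sum V (cls // Delta smult G R) VD"
      by (rule HC_Delta_decomposition)
  next
    fix D D' and V :: "('a, 'v) amod" and W :: "('a, 'w) amod" and f v
    assume D: "D \<in> cls // Delta smult G R" "D' \<in> cls // Delta smult G R" "D \<noteq> D'"
      and "HC_D smult G R D V \<and> HC_D smult G R D' W \<and> amod_hom V W f" and v: "v \<in> mcarrier V"
    then show "f v = mzero W"
      using HC_D_hom_vanishes[OF D _ _ _ v] by blast
  next
    fix V :: "('a, 'u) amod"
    show "(simple_amod V \<and> HC smult G R V) \<longleftrightarrow>
          (\<exists>D \<in> cls // Nabla smult G R. simple_amod V \<and> HC_D smult G R D V)"
      by (rule simple_HC_iff_Nabla_class)
  next
    fix D D' and V :: "('a, 'u) amod"
    assume "D \<in> cls // Nabla smult G R" "D' \<in> cls // Nabla smult G R" "D \<noteq> D'"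
    then show "\<not> (simple_amod V \<and> HC_D smult G R D V \<and> HC_D smult G R D' V)"
      using simple_HC_D_Nabla_unique[of D D' V] by blast
  qed
qed

end
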